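(* Let $A \in \mathbb{C}^{N\times N}$ and $\{\omega_j\}_{j\in\mathbb{N}}\subset\mathbb{C}\setminus\{0\}$. For $\iota\in\{1,2\}$ let $\{\mathcal{Q}^{(\iota)}_j\}_{j\in\mathbb{N}}$ and $\{\mathcal{P}^{(\iota)}_j\}_{j\in\mathbb{N}}$ be sequences of linear subspaces of $\mathbb{C}^N$ with $\mathcal{Q}^{(\iota)}_{j+1}\subseteq\mathcal{Q}^{(\iota)}_j$ and $\mathcal{P}^{(\iota)}_{j+1}\supseteq\mathcal{P}^{(\iota)}_j$ for all $j\in\mathbb{N}$, and suppose $\mathcal{Q}^{(1)}_j\subseteq\mathcal{Q}^{(2)}_j$ and $\mathcal{P}^{(1)}_j\supseteq\mathcal{P}^{(2)}_j$ for all $j\in\mathbb{N}$. Let $\mathcal{M}^{(\iota)}_j$, $j\in\mathbb{N}_0$, be the $\mathcal{M}$-spaces defined by $\mathcal{M}^{(\iota)}_0=\mathbb{C}^N$ and $$\mathcal{M}^{(\iota)}_j = (I-\omega_j A)\cdot\big(\mathcal{M}^{(\iota)}_{j-1}\cap(\mathcal{P}^{(\iota)}_j)^\perp\big) + \mathcal{Q}^{(\iota)}_j,\quad j\in\mathbb{N}.$$ Then $\mathcal{M}^{(\iota)}_{j+1}\subseteq\mathcal{M}^{(\iota)}_j$ for all $j\in\mathbb{N}_0$ and $\iota\in\{1,2\}$, and $\mathcal{M}^{(1)}_j\subseteq\mathcal{M}^{(2)}_j$ for all $j\in\mathbb{N}_0$.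
   Context: $(\cdot)^\perp$ denotes the orthogonal complement in $\mathbb{C}^N$ with respect to the standard Hermitian inner product, and $+$ denotes the sum of subspaces. The spaces $\mathcal{Q}_j$ are called add-spaces and the $\mathcal{P}_j$ cut-spaces. *)

theory Defs
  imports "HOL-Analysis.Analysis"
begin

text \<open>C^N is modelled as complex^'n (N = CARD('n)), matrices as complex^'n^'n.\<close>

definition csubspace :: "(complex^'n) set \<Rightarrow> bool" where
  "csubspace S \<longleftrightarrow> 0 \<in> S \<and> (\<forall>x\<in>S. \<forall>y\<in>S. x + y \<in> S) \<and> (\<forall>c. \<forall>x\<in>S. c *s x \<in> S)"

definition hinner :: "complex^'n \<Rightarrow> complex^'n \<Rightarrow> complex" where
  "hinner x y = (\<Sum>i\<in>UNIV. x $ i * cnj (y $ i))"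

definition hperp :: "(complex^'n) set \<Rightarrow> (complex^'n) set" where
  "hperp S = {y. \<forall>x\<in>S. hinner x y = 0}"

definition ssum :: "(complex^'n) set \<Rightarrow> (complex^'n) set \<Rightarrow> (complex^'n) set" where
  "ssum S T = {x + y | x y. x \<in> S \<and> y \<in> T}"

primrec Mspace :: "(nat \<Rightarrow> complex) \<Rightarrow> complex^'n^'n \<Rightarrow> (nat \<Rightarrow> (complex^'n) set)
    \<Rightarrow> (nat \<Rightarrow> (complex^'n) set) \<Rightarrow> nat \<Rightarrow> (complex^'n) set" where
  "Mspace \<omega> A P Q 0 = UNIV"
| "Mspace \<omega> A P Q (Suc j) =
     ssum ((\<lambda>x. x - \<omega> (Suc j) *s (A *v x)) ` (Mspace \<omega> A P Q j \<inter> hperp (P (Suc j))))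
          (Q (Suc j))"

end

theory Submission
  imports Defs
begin

text \<open>
  The comparison of the two families is monotonicity of the recursion in the add- and
  cut-spaces. For the nesting, by induction, an element \<open>(I - \<omega>(j+1) A) v + q\<close> of \<open>M(j+1)\<close>
  has \<open>v \<in> M(j) \<inter> P(j+1)\<^sup>\<perp> \<subseteq> M(j-1) \<inter> P(j)\<^sup>\<perp>\<close> and \<open>q \<in> Q(j+1) \<subseteq> Q(j) \<subseteq> M(j)\<close>.
  So the subspace \<open>M(j)\<close> contains both \<open>v\<close> and \<open>(I - \<omega>(j) A) v\<close>, hence \<open>A v\<close> since
  \<open>\<omega>(j) \<noteq> 0\<close>, hence \<open>(I - \<omega>(j+1) A) v\<close>.
\<close>

lemma csubspace_iff_subspace: "csubspace S \<longleftrightarrow> vec.subspace S"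
  by (simp add: csubspace_def vec.subspace_def)

lemma hinner_add_right: "hinner x (y + z) = hinner x y + hinner x z"
  by (simp add: hinner_def sum.distrib algebra_simps)

lemma hinner_scale_right: "hinner x (c *s y) = cnj c * hinner x y"
  by (simp add: hinner_def sum_distrib_left algebra_simps)

lemma subspace_hperp: "vec.subspace (hperp S)"
proof (rule vec.subspaceI)
  show "0 \<in> hperp S"
    by (simp add: hperp_def hinner_def)
qed (simp_all add: hperp_def hinner_add_right hinner_scale_right)

lemma hperp_antimono: "S \<subseteq> T \<Longrightarrow> hperp T \<subseteq> hperp S"
  by (auto simp: hperp_def)

lemma ssum_mono: "S \<subseteq> S' \<Longrightarrow> T \<subseteq> T' \<Longrightarrow> ssum S T \<subseteq> ssum S' T'"
  unfolding ssum_def by blast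

lemma linear_shifted_matrix:
  "Vector_Spaces.linear (*s) (*s) (\<lambda>x::'a::field^'n. x - w *s (A *v x))"
  by (intro vec.linear_compose_sub vec.linear_ident vec.linear_compose_scale_right
      matrix_vector_mul_linear_gen)

lemma shifted_matrix_mem_subspace:
  fixes A :: "'a::field^'n^'n"
  assumes M: "vec.subspace M" and "v \<in> M" "v - w *s (A *v v) \<in> M" "w \<noteq> 0"
  shows "v - w' *s (A *v v) \<in> M"
proof -
  have "A *v v = (1 / w) *s (v - (v - w *s (A *v v)))"
    using \<open>w \<noteq> 0\<close> by (simp add: vec_eq_iff)
  then have "A *v v \<in> M"
    using assms by (metis vec.subspace_diff vec.subspace_scale)
  then show ?thesis
    using M \<open>v \<in> M\<close> by (simp add: vec.subspace_diff vec.subspace_scale)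
qed

lemma subspace_Mspace:
  assumes "\<And>j. j \<ge> 1 \<Longrightarrow> csubspace (Q j)"
  shows "vec.subspace (Mspace \<omega> A P Q j)"
proof (induction j)
  case (Suc j)
  then show ?case
    using assms[of "Suc j"]
    by (simp add: ssum_def csubspace_iff_subspace vec.subspace_sums vec.linear_subspace_image
        linear_shifted_matrix vec.subspace_inter subspace_hperp)
qed simp

lemma Mspace_SucI:
  "v \<in> Mspace \<omega> A P Q j \<Longrightarrow> v \<in> hperp (P (Suc j)) \<Longrightarrow> q \<in> Q (Suc j) \<Longrightarrow>
    v - \<omega> (Suc j) *s (A *v v) + q \<in> Mspace \<omega> A P Q (Suc j)"
  by (auto simp: ssum_def)

lemma Mspace_SucE:
  assumes "u \<in> Mspace \<omega> A P Q (Suc j)"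
  obtains v q where "v \<in> Mspace \<omega> A P Q j" "v \<in> hperp (P (Suc j))" "q \<in> Q (Suc j)"
    "u = v - \<omega> (Suc j) *s (A *v v) + q"
  using assms by (auto simp: ssum_def)

lemma Mspace_Suc_subset:
  assumes \<omega>_nz: "\<And>j. j \<ge> 1 \<Longrightarrow> \<omega> j \<noteq> 0"
    and Q_sub: "\<And>j. j \<ge> 1 \<Longrightarrow> csubspace (Q j)"
    and Q_mono: "\<And>j. j \<ge> 1 \<Longrightarrow> Q (Suc j) \<subseteq> Q j"
    and P_mono: "\<And>j. j \<ge> 1 \<Longrightarrow> P j \<subseteq> P (Suc j)"
  shows "Mspace \<omega> A P Q (Suc j) \<subseteq> Mspace \<omega> A P Q j"
proof (induction j)
  case (Suc j)
  let ?M = "Mspace \<omega> A P Q"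
  have M: "vec.subspace (?M k)" for k
    using subspace_Mspace Q_sub by blast
  have zero_Q: "0 \<in> Q (Suc j)"
    using Q_sub[of "Suc j"] by (simp add: csubspace_def)
  show ?case
  proof
    fix u
    assume "u \<in> ?M (Suc (Suc j))"
    then obtain v q where v: "v \<in> ?M (Suc j)" "v \<in> hperp (P (Suc (Suc j)))"
      and q: "q \<in> Q (Suc (Suc j))" and u: "u = v - \<omega> (Suc (Suc j)) *s (A *v v) + q"
      by (rule Mspace_SucE)
    have "v \<in> ?M j" "v \<in> hperp (P (Suc j))"
      using v Suc.IH hperp_antimono[OF P_mono[of "Suc j"]] by auto
    then have "v - \<omega> (Suc j) *s (A *v v) \<in> ?M (Suc j)"
      using Mspace_SucI[where q = 0] zero_Q by fastforce
    then have shifted: "v - \<omega> (Suc (Suc j)) *s (A *v v) \<in> ?M (Suc j)"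
      using shifted_matrix_mem_subspace[OF M v(1)] \<omega>_nz[of "Suc j"] by simp
    have "0 - \<omega> (Suc j) *s (A *v 0) + q \<in> ?M (Suc j)"
      using q Q_mono[of "Suc j"]
      by (intro Mspace_SucI vec.subspace_0 M subspace_hperp) auto
    then have "q \<in> ?M (Suc j)"
      by simp
    with shifted show "u \<in> ?M (Suc j)"
      unfolding u by (intro vec.subspace_add M)
  qed
qed simp

lemma Mspace_subset_Mspace:
  assumes "\<And>j. j \<ge> 1 \<Longrightarrow> Q1 j \<subseteq> Q2 j"
    and "\<And>j. j \<ge> 1 \<Longrightarrow> P2 j \<subseteq> P1 j"
  shows "Mspace \<omega> A P1 Q1 j \<subseteq> Mspace \<omega> A P2 Q2 j"
proof (induction j)
  case (Suc j)
  have "Mspace \<omega> A P1 Q1 j \<inter> hperp (P1 (Suc j)) \<subseteq> Mspace \<omega> A P2 Q2 j \<inter> hperp (P2 (Suc j))"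
    using Suc.IH hperp_antimono[OF assms(2)[of "Suc j"]] by auto
  then show ?case
    by (simp only: Mspace.simps(2)) (intro ssum_mono image_mono assms(1), simp_all)
qed simp

theorem theorem1:
  fixes A :: "complex^'n^'n"
    and \<omega> :: "nat \<Rightarrow> complex"
    and Q1 Q2 P1 P2 :: "nat \<Rightarrow> (complex^'n) set"
  assumes \<omega>_nz: "\<And>j. j \<ge> 1 \<Longrightarrow> \<omega> j \<noteq> 0"
    and sub: "\<And>j. j \<ge> 1 \<Longrightarrow> csubspace (Q1 j) \<and> csubspace (Q2 j) \<and> csubspace (P1 j) \<and> csubspace (P2 j)"
    and Q1_mono: "\<And>j. j \<ge> 1 \<Longrightarrow> Q1 (Suc j) \<subseteq> Q1 j"
    and Q2_mono: "\<And>j. j \<ge> 1 \<Longrightarrow> Q2 (Suc j) \<subseteq> Q2 j"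
    and P1_mono: "\<And>j. j \<ge> 1 \<Longrightarrow> P1 j \<subseteq> P1 (Suc j)"
    and P2_mono: "\<And>j. j \<ge> 1 \<Longrightarrow> P2 j \<subseteq> P2 (Suc j)"
    and Q12: "\<And>j. j \<ge> 1 \<Longrightarrow> Q1 j \<subseteq> Q2 j"
    and P12: "\<And>j. j \<ge> 1 \<Longrightarrow> P2 j \<subseteq> P1 j"
  shows "(\<forall>j. Mspace \<omega> A P1 Q1 (Suc j) \<subseteq> Mspace \<omega> A P1 Q1 j)
       \<and> (\<forall>j. Mspace \<omega> A P2 Q2 (Suc j) \<subseteq> Mspace \<omega> A P2 Q2 j)
       \<and> (\<forall>j. Mspace \<omega> A P1 Q1 j \<subseteq> Mspace \<omega> A P2 Q2 j)"
proof (intro conjI allI)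
  fix j
  show "Mspace \<omega> A P1 Q1 (Suc j) \<subseteq> Mspace \<omega> A P1 Q1 j"
    by (rule Mspace_Suc_subset) (use \<omega>_nz sub Q1_mono P1_mono in auto)
  show "Mspace \<omega> A P2 Q2 (Suc j) \<subseteq> Mspace \<omega> A P2 Q2 j"
    by (rule Mspace_Suc_subset) (use \<omega>_nz sub Q2_mono P2_mono in auto)
  show "Mspace \<omega> A P1 Q1 j \<subseteq> Mspace \<omega> A P2 Q2 j"
    using Mspace_subset_Mspace[OF Q12 P12] .
qed

end
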